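(* Let $m/n\in(0,1/2)$ in lowest terms, write $c_{m/n}=1\,0^{\kappa_1}\,11\,0^{\kappa_2}\,11\cdots11\,0^{\kappa_m}\,1$, and let $1\le r\le m$. Then the word $c=1\,0^{\kappa_r+1}\,11\,0^{\kappa_{r+1}}\,11\cdots11\,0^{\kappa_m}\,1$ disagrees with $c_{m/n}$ at some position within the shorter of their two lengths, and $c$ is greater than $c_{m/n}$ in the unimodal order.
   Context: $\kappa_1=\lfloor n/m\rfloor-1$ and $\kappa_i=\lfloor in/m\rfloor-\lfloor(i-1)n/m\rfloor-2$ for $2\le i\le m$. The unimodal order $\prec$ on words over $\{0,1\}$ which disagree within their common length: if $j$ is the first index with $s_j\ne t_j$, then $s\prec t$ iff either $s_0\cdots s_{j-1}$ contains an even number of $1$s and $s_j<t_j$, or an odd number of $1$s and $s_j>t_j$. *)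

theory Defs
  imports Main
begin

text \<open>Words over {0,1} are lists of naturals with entries 0 and 1.\<close>

definition kappa :: "nat \<Rightarrow> nat \<Rightarrow> nat \<Rightarrow> nat" where
  "kappa m n i = (if i = 1 then n div m - 1
                  else (i * n) div m - ((i - 1) * n) div m - 2)"

definition blocks :: "nat \<Rightarrow> nat \<Rightarrow> nat \<Rightarrow> nat \<Rightarrow> nat list" where
  "blocks m n a b = concat (map (\<lambda>i. [1, 1] @ replicate (kappa m n i) 0) [a..<Suc b])"

definition kneading :: "nat \<Rightarrow> nat \<Rightarrow> nat list" where
  "kneading m n = [1] @ replicate (kappa m n 1) 0 @ blocks m n 2 m @ [1]"

definition cword :: "nat \<Rightarrow> nat \<Rightarrow> nat \<Rightarrow> nat list" where
  "cword m n r = [1] @ replicate (kappa m n r + 1) 0 @ blocks m n (Suc r) m @ [1]"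

definition disagree :: "nat list \<Rightarrow> nat list \<Rightarrow> bool" where
  "disagree s t \<longleftrightarrow> (\<exists>j < min (length s) (length t). s ! j \<noteq> t ! j)"

definition first_diff :: "nat list \<Rightarrow> nat list \<Rightarrow> nat" where
  "first_diff s t = (LEAST j. j < min (length s) (length t) \<and> s ! j \<noteq> t ! j)"

definition unimodal_less :: "nat list \<Rightarrow> nat list \<Rightarrow> bool" where
  "unimodal_less s t \<longleftrightarrow> disagree s t \<and>
     (let j = first_diff s t; k = count_list (take j s) 1 in
       (even k \<and> s ! j < t ! j) \<or> (odd k \<and> s ! j > t ! j))"

end

theory Submission
  imports Defs
begin

text \<open>Let \<open>q i = \<lfloor>i n / m\<rfloor>\<close> and \<open>a = r - 1\<close>. Then \<open>q (a + i) = q a + q i + e i\<close> with a carry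
  \<open>e i \<in> {0, 1}\<close> and \<open>e 0 = 0\<close>, so the \<open>i\<close>-th zero run of \<open>c\<close> exceeds the \<open>i\<close>-th zero run of
  \<open>c\<^sub>m\<^sub>/\<^sub>n\<close> by \<open>e i - e (i - 1)\<close>. For \<open>a > 0\<close> coprimality forces \<open>e (m - a) = 1\<close>, where \<open>m - a\<close>
  is the number of runs of \<open>c\<close>; at the first index where the carry becomes \<open>1\<close> the run of \<open>c\<close> is
  longer by exactly one while all earlier runs agree (for \<open>a = 0\<close> this happens at the first run).
  There \<open>c\<^sub>m\<^sub>/\<^sub>n\<close> reads \<open>1\<close> and \<open>c\<close> reads \<open>0\<close>, after a common prefix with an odd number of \<open>1\<close>s,
  which puts \<open>c\<^sub>m\<^sub>/\<^sub>n\<close> below \<open>c\<close> in the unimodal order.\<close>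

lemma first_diff_append_Cons:
  assumes "x \<noteq> y"
  shows "first_diff (p @ x # s) (p @ y # t) = length p"
  unfolding first_diff_def
proof (rule Least_equality)
  fix j assume "j < min (length (p @ x # s)) (length (p @ y # t)) \<and> (p @ x # s) ! j \<noteq> (p @ y # t) ! j"
  then show "length p \<le> j" by (auto simp: nth_append split: if_splits)
qed (use assms in simp)

lemma unimodal_less_odd_prefix:
  assumes "odd (count_list p 1)"
  shows "disagree (p @ 0 # t) (p @ 1 # s) \<and> unimodal_less (p @ 1 # s) (p @ 0 # t)"
proof -
  have "length p < min (length (p @ 0 # t)) (length (p @ 1 # s))" by simp
  then have "disagree (p @ 0 # t) (p @ 1 # s)" "disagree (p @ 1 # s) (p @ 0 # t)"
    unfolding disagree_def by (metis nth_append_length zero_neq_one min.commute)+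
  then show ?thesis
    using assms by (simp add: unimodal_less_def first_diff_append_Cons)
qed

definition block_word :: "nat list \<Rightarrow> nat list" where
  "block_word ks = concat (map (\<lambda>k. [1, 1] @ replicate k 0) ks)"

text \<open>\<open>runs_word [k\<^sub>1, ..., k\<^sub>L] = 1 0^{k\<^sub>1} 11 0^{k\<^sub>2} 11 ... 11 0^{k\<^sub>L} 1\<close>: the leading
  \<open>11\<close> of the blocks loses one \<open>1\<close>.\<close>
definition runs_word :: "nat list \<Rightarrow> nat list" where
  "runs_word ks = tl (block_word ks) @ [1]"

lemma block_word_simps [simp]:
  "block_word [] = []"
  "block_word (k # ks) = [1, 1] @ replicate k 0 @ block_word ks"
  "block_word (ks @ ls) = block_word ks @ block_word ls"
  by (simp_all add: block_word_def)

lemma count_block_word: "count_list (block_word ks) 1 = 2 * length ks"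
  by (induction ks) auto

lemma runs_word_first_excess:
  "disagree (runs_word (p @ Suc a # ys)) (runs_word (p @ a # xs)) \<and>
   unimodal_less (runs_word (p @ a # xs)) (runs_word (p @ Suc a # ys))"
proof -
  define P where "P = tl (block_word (p @ [a]))"
  have tl_append: "tl (block_word (p @ [a]) @ w) = P @ w" for w
    unfolding P_def by (cases p) simp_all
  have "runs_word (p @ a # xs) = P @ 1 # tl (block_word xs @ [1])"
    unfolding runs_word_def using tl_append[of "block_word xs"] by (cases xs) simp_all
  moreover have "runs_word (p @ Suc a # ys) = P @ 0 # (block_word ys @ [1])"
    unfolding runs_word_def using tl_append[of "0 # block_word ys"]
    by (simp add: replicate_append_same[symmetric])
  moreover have "count_list P 1 = 2 * length p + 1"
    unfolding P_def by (cases p) (simp_all add: count_block_word[simplified])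
  ultimately show ?thesis using unimodal_less_odd_prefix[of P] by simp
qed

lemma blocks_eq_block_word: "blocks m n a b = block_word (map (kappa m n) [a..<Suc b])"
  by (simp add: blocks_def block_word_def comp_def)

lemma kneading_eq_runs_word:
  "kneading m n = runs_word (kappa m n 1 # map (kappa m n) [2..<Suc m])"
  by (simp add: kneading_def runs_word_def blocks_eq_block_word)

lemma cword_eq_runs_word:
  "cword m n r = runs_word ((kappa m n r + 1) # map (kappa m n) [Suc r..<Suc m])"
  by (simp add: cword_def runs_word_def blocks_eq_block_word)

lemma first_excess_from_carries:
  fixes ks ls :: "nat list" and e :: "nat \<Rightarrow> nat"
  assumes "length ls \<le> length ks" "e 0 = 0" "\<And>i. e i \<le> 1" "e (length ls) = 1"
    and "\<And>i. i < length ls \<Longrightarrow> ls ! i + e i = ks ! i + e (Suc i)"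
  shows "\<exists>p a xs ys. ks = p @ a # xs \<and> ls = p @ Suc a # ys"
  using assms
proof (induction ls arbitrary: ks e)
  case Nil
  then show ?case by simp
next
  case (Cons l ls)
  then obtain k ks' where ks: "ks = k # ks'" by (cases ks) auto
  have head: "l = k + e 1" using Cons.prems(5)[of 0] Cons.prems(2) ks by simp
  show ?case
  proof (cases "e 1 = 0")
    case True
    have "\<exists>p a xs ys. ks' = p @ a # xs \<and> ls = p @ Suc a # ys"
    proof (rule Cons.IH[where e = "e \<circ> Suc"])
      show "\<And>i. i < length ls \<Longrightarrow> ls ! i + (e \<circ> Suc) i = ks' ! i + (e \<circ> Suc) (Suc i)"
        using Cons.prems(5) ks by fastforce
    qed (use Cons.prems ks True in auto)
    then obtain p a xs ys where "ks' = p @ a # xs" "ls = p @ Suc a # ys" by blast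
    then show ?thesis using ks head True by (metis append_Cons add_0_right)
  next
    case False
    then have "l = Suc k" using head Cons.prems(3)[of 1] by simp
    then show ?thesis using ks by (metis append_Nil)
  qed
qed

definition carry :: "nat \<Rightarrow> nat \<Rightarrow> nat \<Rightarrow> nat \<Rightarrow> nat" where
  "carry m n a b = (a * n mod m + b * n mod m) div m"

lemma floor_add_carry: "(a + b) * n div m = a * n div m + b * n div m + carry m n a b"
  unfolding carry_def by (metis add_mult_distrib div_add1_eq)

lemma carry_le_1:
  assumes "0 < m"
  shows "carry m n a b \<le> 1"
proof -
  have "a * n mod m < m" "b * n mod m < m" using assms by simp_all
  then have "a * n mod m + b * n mod m < 2 * m" by linarith
  then have "(a * n mod m + b * n mod m) div m < 2" by (simp add: less_mult_imp_div_less)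
  then show ?thesis unfolding carry_def by linarith
qed

lemma carry_0_right [simp]: "carry m n a 0 = 0"
  by (simp add: carry_def)

lemma carry_complement:
  assumes "coprime m n" "0 < a" "a < m"
  shows "carry m n a (m - a) = 1"
proof -
  have "\<not> m dvd a * n"
    using assms by (metis coprime_dvd_mult_left_iff nat_dvd_not_less)
  then have pos: "0 < a * n mod m" by (simp add: dvd_eq_mod_eq_0)
  have "(a * n mod m + (m - a) * n mod m) mod m = (a * n + (m - a) * n) mod m"
    by (simp add: mod_add_eq)
  also have "a * n + (m - a) * n = m * n" using assms by (simp add: add_mult_distrib[symmetric])
  finally obtain k where k: "a * n mod m + (m - a) * n mod m = m * k"
    by (auto simp: dvd_eq_mod_eq_0[symmetric])
  have "a * n mod m < m" "(m - a) * n mod m < m" using assms by simp_all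
  then have "m * k < m * 2" "0 < m * k" using k pos by linarith+
  then have "k = 1" by simp
  then show ?thesis unfolding carry_def using k assms by simp
qed

lemma kappa_one:
  assumes "0 < m" "m \<le> n"
  shows "kappa m n 1 + 1 = n div m"
  using assms by (simp add: kappa_def div_greater_zero_iff)

lemma kappa_Suc:
  assumes "0 < m" "2 * m \<le> n" "0 < i"
  shows "i * n div m + kappa m n (Suc i) + 2 = Suc i * n div m"
proof -
  have "2 \<le> n div m" using assms div_le_mono[of "2 * m" n m] by simp
  then show ?thesis
    using assms floor_add_carry[of i 1 n m] by (simp add: kappa_def)
qed

lemma kappa_shift_first:
  assumes "0 < m" "2 * m \<le> n" "0 < a"
  shows "kappa m n (Suc a) + 1 = kappa m n 1 + carry m n a 1"
  using assms kappa_Suc[of m n a] kappa_one[of m n] floor_add_carry[of a 1 n m] by simp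

lemma kappa_shift:
  assumes "0 < m" "2 * m \<le> n" "0 < a" "0 < i"
  shows "kappa m n (Suc a + i) + carry m n a i = kappa m n (Suc i) + carry m n a (Suc i)"
  using assms kappa_Suc[of m n "a + i"] kappa_Suc[of m n i]
    floor_add_carry[of a i n m] floor_add_carry[of a "Suc i" n m] by simp

lemma kappa_runs_first_excess:
  assumes "0 < m" "2 * m < n" "coprime m n" "1 \<le> r" "r \<le> m"
  obtains p b xs ys where
    "kappa m n 1 # map (kappa m n) [2..<Suc m] = p @ b # xs"
    "(kappa m n r + 1) # map (kappa m n) [Suc r..<Suc m] = p @ Suc b # ys"
proof -
  obtain a where r: "r = Suc a" using assms(4) by (cases r) auto
  define ks where "ks = kappa m n 1 # map (kappa m n) [2..<Suc m]"
  define ls where "ls = (kappa m n (Suc a) + 1) # map (kappa m n) [Suc (Suc a)..<Suc m]"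
  have "\<exists>p b xs ys. ks = p @ b # xs \<and> ls = p @ Suc b # ys"
  proof (cases "a = 0")
    case True
    then have "ks = [] @ kappa m n 1 # map (kappa m n) [2..<Suc m]"
      "ls = [] @ Suc (kappa m n 1) # map (kappa m n) [2..<Suc m]"
      by (simp_all add: ks_def ls_def numeral_2_eq_2 del: upt_Suc)
    then show ?thesis by blast
  next
    case False
    show ?thesis
    proof (rule first_excess_from_carries[where e = "carry m n a"])
      have "length ls = m - a" using assms r by (simp add: ls_def del: upt_Suc)
      then show "carry m n a (length ls) = 1"
        using assms r False carry_complement[of m n a] by simp
    next
      fix i
      assume "i < length ls"
      then show "ls ! i + carry m n a i = ks ! i + carry m n a (Suc i)"
        using assms False kappa_shift_first[of m n a] kappa_shift[of m n a i]
        by (cases i) (simp_all add: ks_def ls_def nth_map_upt del: upt_Suc)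
    qed (use assms r carry_le_1 in \<open>simp_all add: ks_def ls_def del: upt_Suc\<close>)
  qed
  then obtain p b xs ys where "ks = p @ b # xs" "ls = p @ Suc b # ys" by blast
  then show ?thesis using that r by (simp add: ks_def ls_def del: upt_Suc)
qed

theorem lemma4p2:
  fixes m n r :: nat
  assumes "0 < m" "2 * m < n" "coprime m n" "1 \<le> r" "r \<le> m"
  shows "disagree (cword m n r) (kneading m n) \<and> unimodal_less (kneading m n) (cword m n r)"
proof -
  obtain p b xs ys where
    "kappa m n 1 # map (kappa m n) [2..<Suc m] = p @ b # xs"
    "(kappa m n r + 1) # map (kappa m n) [Suc r..<Suc m] = p @ Suc b # ys"
    using kappa_runs_first_excess[OF assms] .
  then show ?thesis
    using runs_word_first_excess[of p b ys xs]
    by (simp only: kneading_eq_runs_word cword_eq_runs_word)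
qed

end
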